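(* Let a game belong to the class $\mathcal P$ with parameters $w$ and $\gamma>0$, $w>-(I-1)\gamma$, and set $p=\gamma/(w+\gamma I)$. If $0<\varepsilon<\bar\varepsilon$ then for every information tree $\mathcal T$, $$\max_{\sigma\in\mathcal E(\mathcal T)}\mathbb P_{\mathcal T}[a_i=1\ \forall i\mid\sigma]=\begin{cases}1&\text{if }p\le q_1,\\ \rho(1-\varepsilon)^I&\text{if }q_1<p\le q_2,\\ 0&\text{if }p>q_2,\end{cases}$$ where $q_1=\rho\varepsilon/(1-\rho(1-\varepsilon))$ and $q_2=(1-\varepsilon)^{I-1}$.
   Context: Model. Fix an integer $I\ge2$, agents $\mathcal I=\{1,\dots,I\}$, a prior $\rho\in(0,1)$ and a loss probability $\varepsilon\in(0,1)$. A state of nature $\theta\in\{g,b\}$ has $\Pr(\theta=g)=\rho$. A forest on $\mathcal I$ is a collection of vertex-disjoint undirected trees whose vertex sets partition $\mathcal I$; a seeding chooses exactly one vertex (seed) of each tree. The pair $\mathcal T$ (forest, seeding) is an information tree: orient each tree away from its seed and add a root $0$ (the planner) with an arc from $0$ to each seed. If $\theta=b$ no messages are sent. If $\theta=g$ the planner sends a message along each arc from $0$, and every agent who receives a message forwards it along every arc leaving her. Each transmission is lost independently with probability $\varepsilon$. Agent $i$ observes only $x_i\in\{y,n\}$ (received / not); $\mathbb P_{\mathcal T}$ is the induced probability. $\bar\varepsilon$ is the unique $\varepsilon\in(0,1)$ with $q_1=q_2$. Class $\mathcal P$: symmetric $I$-player games in which each $i$ chooses $a_i\in\{0,1\}$,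 payoffs $u^\theta_i(a_i,\mathbf a_{-i})$ depend on $\theta$, $a_i$ and $\sum_{j\ne i}a_j$, and for each $\theta$ there is a potential $v^\theta$ with $u^\theta_i(a_i,\mathbf a_{-i})-u^\theta_i(a_i',\mathbf a_{-i})=v^\theta(a_i,\mathbf a_{-i})-v^\theta(a_i',\mathbf a_{-i})$ for all $i,a_i,a_i',\mathbf a_{-i}$, where $v^g(\mathbf a)=w$ if $\sum_ja_j=I$, $v^g(\mathbf a)=-\gamma\sum_ja_j$ if $\sum_ja_j<I$, and $v^b(\mathbf a)=-\gamma\sum_ja_j$. Each agent chooses $a_i$ knowing only $x_i$; $\mathcal E(\mathcal T)$ is the set of (mixed) Bayesian Nash equilibria. *)

theory Defs
  imports Main Complex_Main
begin

text \<open>Agents are 1..I; node 0 is the planner. An information tree (forest plus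
seeding, oriented away from the seeds, with the root 0 attached to every seed)
is encoded by its parent function: par i is the tail of the unique arc entering
agent i (par i = 0 iff i is a seed). Acyclicity: every agent reaches 0.\<close>

definition info_tree :: "nat \<Rightarrow> (nat \<Rightarrow> nat) \<Rightarrow> bool" where
  "info_tree I par \<longleftrightarrow> (\<forall>i\<in>{1..I}. par i \<le> I \<and> (\<exists>n. (par ^^ n) i = 0))"

text \<open>Agents on the path from the planner to i (including i); the arc entering
agent j is identified with j.\<close>
definition path_agents :: "(nat \<Rightarrow> nat) \<Rightarrow> nat \<Rightarrow> nat set" where
  "path_agents par i = {(par ^^ k) i | k. \<forall>m\<le>k. (par ^^ m) i \<noteq> 0}"

text \<open>State: theta (True = g, False = b) and the set S of arcs (identified with
their head agents) whose transmission is not lost.\<close>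
definition received :: "(nat \<Rightarrow> nat) \<Rightarrow> bool \<Rightarrow> nat set \<Rightarrow> nat \<Rightarrow> bool" where
  "received par th S i \<longleftrightarrow> th \<and> path_agents par i \<subseteq> S"

definition state_prob :: "nat \<Rightarrow> real \<Rightarrow> real \<Rightarrow> bool \<Rightarrow> nat set \<Rightarrow> real" where
  "state_prob I \<rho> \<epsilon> th S =
     (if th then \<rho> else 1 - \<rho>) * (1 - \<epsilon>) ^ card S * \<epsilon> ^ (I - card S)"

text \<open>Mixed strategy profile: sigma j x = probability that agent j plays 1
after observing x (True = y received, False = n).
Action profiles are represented by the set T of agents playing 1.\<close>
definition act_prob :: "nat \<Rightarrow> (nat \<Rightarrow> bool \<Rightarrow> real) \<Rightarrow> (nat \<Rightarrow> bool) \<Rightarrow> nat set \<Rightarrow> real" where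
  "act_prob I \<sigma> x T = (\<Prod>j\<in>{1..I}. if j \<in> T then \<sigma> j (x j) else 1 - \<sigma> j (x j))"

text \<open>Symmetric payoff u th a k: state th, own action a (True = 1), k = number of
other agents playing 1.\<close>
definition exp_payoff ::
  "nat \<Rightarrow> real \<Rightarrow> real \<Rightarrow> (nat \<Rightarrow> nat) \<Rightarrow> (bool \<Rightarrow> bool \<Rightarrow> nat \<Rightarrow> real)
   \<Rightarrow> (nat \<Rightarrow> bool \<Rightarrow> real) \<Rightarrow> nat \<Rightarrow> real" where
  "exp_payoff I \<rho> \<epsilon> par u \<sigma> i =
     (\<Sum>th\<in>(UNIV::bool set). \<Sum>S\<in>Pow {1..I}. state_prob I \<rho> \<epsilon> th S *
        (\<Sum>T\<in>Pow {1..I}. act_prob I \<sigma> (received par th S) T * u th (i \<in> T) (card (T - {i}))))"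

definition mixed_profile :: "nat \<Rightarrow> (nat \<Rightarrow> bool \<Rightarrow> real) \<Rightarrow> bool" where
  "mixed_profile I \<sigma> \<longleftrightarrow> (\<forall>j\<in>{1..I}. \<forall>x. 0 \<le> \<sigma> j x \<and> \<sigma> j x \<le> 1)"

definition BNE ::
  "nat \<Rightarrow> real \<Rightarrow> real \<Rightarrow> (nat \<Rightarrow> nat) \<Rightarrow> (bool \<Rightarrow> bool \<Rightarrow> nat \<Rightarrow> real)
   \<Rightarrow> (nat \<Rightarrow> bool \<Rightarrow> real) \<Rightarrow> bool" where
  "BNE I \<rho> \<epsilon> par u \<sigma> \<longleftrightarrow> mixed_profile I \<sigma> \<and>
     (\<forall>i\<in>{1..I}. \<forall>\<tau>. (\<forall>x. 0 \<le> \<tau> x \<and> \<tau> x \<le> 1) \<longrightarrow>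
        exp_payoff I \<rho> \<epsilon> par u (\<sigma>(i := \<tau>)) i \<le> exp_payoff I \<rho> \<epsilon> par u \<sigma> i)"

definition coord_prob ::
  "nat \<Rightarrow> real \<Rightarrow> real \<Rightarrow> (nat \<Rightarrow> nat) \<Rightarrow> (nat \<Rightarrow> bool \<Rightarrow> real) \<Rightarrow> real" where
  "coord_prob I \<rho> \<epsilon> par \<sigma> =
     (\<Sum>th\<in>(UNIV::bool set). \<Sum>S\<in>Pow {1..I}. state_prob I \<rho> \<epsilon> th S *
        (\<Prod>j\<in>{1..I}. \<sigma> j (received par th S j)))"

definition potP :: "nat \<Rightarrow> real \<Rightarrow> real \<Rightarrow> bool \<Rightarrow> nat set \<Rightarrow> real" where
  "potP I w \<gamma> th T = (if th \<and> card T = I then w else - \<gamma> * real (card T))"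

definition set_act :: "nat \<Rightarrow> bool \<Rightarrow> nat set \<Rightarrow> nat set" where
  "set_act i b T = (if b then insert i T else T - {i})"

definition in_class_P :: "nat \<Rightarrow> real \<Rightarrow> real \<Rightarrow> (bool \<Rightarrow> bool \<Rightarrow> nat \<Rightarrow> real) \<Rightarrow> bool" where
  "in_class_P I w \<gamma> u \<longleftrightarrow>
     (\<forall>th. \<forall>i\<in>{1..I}. \<forall>T. T \<subseteq> {1..I} \<longrightarrow> (\<forall>b c.
        u th b (card (T - {i})) - u th c (card (T - {i}))
          = potP I w \<gamma> th (set_act i b T) - potP I w \<gamma> th (set_act i c T)))"

definition q1 :: "real \<Rightarrow> real \<Rightarrow> real" where
  "q1 \<rho> \<epsilon> = \<rho> * \<epsilon> / (1 - \<rho> * (1 - \<epsilon>))"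

definition q2 :: "nat \<Rightarrow> real \<Rightarrow> real" where
  "q2 I \<epsilon> = (1 - \<epsilon>) ^ (I - 1)"

definition epsbar :: "nat \<Rightarrow> real \<Rightarrow> real" where
  "epsbar I \<rho> = (THE e. 0 < e \<and> e < 1 \<and> q1 \<rho> e = q2 I e)"

end

theory Submission
  imports Defs
begin

(* Since the game has a potential, agent i's gain from switching to action 1 after observation x
   is the expectation, over the states compatible with x, of
   -gamma + [theta = g] (w + gamma I) Pr[all other agents play 1 | state];
   equilibria are therefore characterised by the signs of these incentives.

   An agent who has not received the message knows that the transmission failed somewhere on her
   path.  If p > q1, induction along the tree shows that no agent plays 1 without the message, so
   coordination requires every agent to receive it, which happens with probability rho (1-eps)^I.
   If moreover p > q2, a seed who receives the message expects the others to coordinate with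
   probability at most (1-eps)^(I-1), too little to cover the cost, so she never plays 1 and
   coordination has probability 0.  Conversely "always 1", "play 1 iff the message arrived" and
   "always 0" are equilibria attaining these bounds, and eps < epsbar ensures q1 < q2. *)

section \<open>Expectations over the state\<close>

lemma sum_supersets_power:
  fixes a b :: "'b :: comm_semiring_1"
  assumes "finite U" "P \<subseteq> U"
  shows "(\<Sum>S\<in>Pow U. of_bool (P \<subseteq> S) * a ^ card S * b ^ card (U - S))
         = a ^ card P * (a + b) ^ card (U - P)"
proof -
  have "(\<Sum>S\<in>Pow U. of_bool (P \<subseteq> S) * a ^ card S * b ^ card (U - S))
      = (\<Sum>S\<in>Pow U. (\<Prod>x\<in>S. a) * (\<Prod>x\<in>U - S. if x \<in> P then 0 else b))"
  proof (rule sum.cong)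
    fix S assume S: "S \<in> Pow U"
    show "of_bool (P \<subseteq> S) * a ^ card S * b ^ card (U - S)
        = (\<Prod>x\<in>S. a) * (\<Prod>x\<in>U - S. if x \<in> P then 0 else b)"
    proof (cases "P \<subseteq> S")
      case True
      then have "(\<Prod>x\<in>U - S. if x \<in> P then 0 else b) = (\<Prod>x\<in>U - S. b)"
        by (intro prod.cong) auto
      then show ?thesis using True by simp
    next
      case False
      then have "(\<Prod>x\<in>U - S. if x \<in> P then 0 else b) = 0"
        using assms by (intro prod_zero) auto
      then show ?thesis using False by (simp del: prod_zero_iff)
    qed
  qed simp
  also have "\<dots> = (\<Prod>x\<in>U. a + (if x \<in> P then 0 else b))"
    by (rule prod_add [symmetric]) fact
  also have "\<dots> = (\<Prod>x\<in>P. a + (if x \<in> P then 0 else b)) * (\<Prod>x\<in>U - P. a + (if x \<in> P then 0 else b))"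
    using prod.subset_diff [OF assms(2,1)] by (simp only: mult.commute)
  also have "\<dots> = (\<Prod>x\<in>P. a) * (\<Prod>x\<in>U - P. a + b)"
    by (intro arg_cong2 [where f = "(*)"] prod.cong) auto
  finally show ?thesis by simp
qed

lemma prod_of_bool:
  "finite A \<Longrightarrow> (\<Prod>j\<in>A. of_bool (P j)) = (of_bool (\<forall>j\<in>A. P j) :: 'a :: comm_semiring_1)"
  by (induction A rule: finite_induct) auto

definition expect :: "nat \<Rightarrow> real \<Rightarrow> real \<Rightarrow> (bool \<Rightarrow> nat set \<Rightarrow> real) \<Rightarrow> real" where
  "expect I \<rho> \<epsilon> F = (\<Sum>th\<in>UNIV. \<Sum>S\<in>Pow {1..I}. state_prob I \<rho> \<epsilon> th S * F th S)"

lemma expect_add [simp]: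
  "expect I \<rho> \<epsilon> (\<lambda>th S. F th S + G th S) = expect I \<rho> \<epsilon> F + expect I \<rho> \<epsilon> G"
  unfolding expect_def by (simp add: sum.distrib distrib_left)

lemma expect_diff [simp]:
  "expect I \<rho> \<epsilon> (\<lambda>th S. F th S - G th S) = expect I \<rho> \<epsilon> F - expect I \<rho> \<epsilon> G"
  unfolding expect_def by (simp add: sum_subtractf right_diff_distrib)

lemma expect_cmult [simp]:
  "expect I \<rho> \<epsilon> (\<lambda>th S. c * F th S) = c * expect I \<rho> \<epsilon> F"
  unfolding expect_def by (simp add: sum_distrib_left mult_ac)

lemma expect_mono:
  assumes "0 \<le> \<rho>" "\<rho> \<le> 1" "0 \<le> \<epsilon>" "\<epsilon> \<le> 1"
    and "\<And>th S. S \<subseteq> {1..I} \<Longrightarrow> F th S \<le> G th S"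
  shows "expect I \<rho> \<epsilon> F \<le> expect I \<rho> \<epsilon> G"
  unfolding expect_def state_prob_def using assms by (intro sum_mono mult_left_mono) auto

lemma sum_delivery_prob_supersets:
  fixes \<epsilon> :: real
  assumes "P \<subseteq> {1..I}"
  shows "(\<Sum>S\<in>Pow {1..I}. of_bool (P \<subseteq> S) * (1 - \<epsilon>) ^ card S * \<epsilon> ^ (I - card S)) = (1 - \<epsilon>) ^ card P"
proof -
  have "(\<Sum>S\<in>Pow {1..I}. of_bool (P \<subseteq> S) * (1 - \<epsilon>) ^ card S * \<epsilon> ^ (I - card S))
      = (\<Sum>S\<in>Pow {1..I}. of_bool (P \<subseteq> S) * (1 - \<epsilon>) ^ card S * \<epsilon> ^ card ({1..I} - S))"
    by (intro sum.cong refl) (auto simp: card_Diff_subset finite_subset)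
  also have "\<dots> = (1 - \<epsilon>) ^ card P"
    using sum_supersets_power [OF _ assms, of "1 - \<epsilon>" \<epsilon>] by simp
  finally show ?thesis .
qed

lemma expect_good_and_delivered:
  assumes "P \<subseteq> {1..I}"
  shows "expect I \<rho> \<epsilon> (\<lambda>th S. of_bool (th \<and> P \<subseteq> S)) = \<rho> * (1 - \<epsilon>) ^ card P"
proof -
  have "expect I \<rho> \<epsilon> (\<lambda>th S. of_bool (th \<and> P \<subseteq> S))
      = \<rho> * (\<Sum>S\<in>Pow {1..I}. of_bool (P \<subseteq> S) * (1 - \<epsilon>) ^ card S * \<epsilon> ^ (I - card S))"
    unfolding expect_def state_prob_def UNIV_bool sum_distrib_left by (simp add: mult_ac)
  then show ?thesis using sum_delivery_prob_supersets [OF assms] by simp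
qed

lemma expect_const [simp]: "expect I \<rho> \<epsilon> (\<lambda>th S. c) = c"
proof -
  have "(\<Sum>S\<in>Pow {1..I}. (1 - \<epsilon>) ^ card S * \<epsilon> ^ (I - card S)) = 1"
    using sum_delivery_prob_supersets [of "{}" I \<epsilon>] by simp
  then show ?thesis
    unfolding expect_def state_prob_def UNIV_bool
    by (simp add: mult.assoc algebra_simps flip: sum_distrib_left sum_distrib_right)
qed

section \<open>Paths in the information tree\<close>

lemma funpow_par_in_agents:
  assumes "info_tree I par" and "i \<in> {1..I}" and "\<forall>m\<le>k. (par ^^ m) i \<noteq> 0"
  shows "(par ^^ k) i \<in> {1..I}"
  using assms(3)
proof (induction k)
  case (Suc k)
  then have "(par ^^ k) i \<in> {1..I}" by simp
  then have "par ((par ^^ k) i) \<le> I" using assms(1) unfolding info_tree_def by blast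
  moreover have "par ((par ^^ k) i) \<noteq> 0" using Suc.prems by (metis funpow.simps(2) o_apply order_refl)
  ultimately show ?case by simp
qed (use assms(2) in simp)

lemma path_agents_subset:
  assumes "info_tree I par" and "i \<in> {1..I}"
  shows "path_agents par i \<subseteq> {1..I}"
  using funpow_par_in_agents [OF assms] unfolding path_agents_def by blast

lemma self_in_path_agents: "i \<noteq> 0 \<Longrightarrow> i \<in> path_agents par i"
  unfolding path_agents_def by (auto intro!: exI [of _ 0])

lemma card_path_agents_ge_1:
  assumes "info_tree I par" and "i \<in> {1..I}"
  shows "1 \<le> card (path_agents par i)"
proof -
  have "finite (path_agents par i)"
    using path_agents_subset [OF assms] finite_subset by blast
  then show ?thesis
    using self_in_path_agents [of i par] assms(2) by (auto simp: Suc_le_eq card_gt_0_iff)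
qed

lemma received_imp_delivered:
  "i \<noteq> 0 \<Longrightarrow> received par th S i \<Longrightarrow> th \<and> i \<in> S"
  unfolding received_def using self_in_path_agents by blast

lemma received_iff_all_delivered:
  assumes "info_tree I par" and "I \<ge> 1"
  shows "(\<forall>j\<in>{1..I}. received par th S j) \<longleftrightarrow> th \<and> {1..I} \<subseteq> S"
proof
  assume "\<forall>j\<in>{1..I}. received par th S j"
  then show "th \<and> {1..I} \<subseteq> S"
    using assms(2) received_imp_delivered [of _ par th S] by force
next
  assume "th \<and> {1..I} \<subseteq> S"
  then show "\<forall>j\<in>{1..I}. received par th S j"
    using path_agents_subset [OF assms(1)] unfolding received_def by blast
qed

lemma others_received_iff_all_delivered:
  assumes "info_tree I par" and "i \<in> {1..I}" and "received par th S i"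
  shows "(\<forall>j\<in>{1..I} - {i}. received par th S j) \<longleftrightarrow> th \<and> {1..I} \<subseteq> S"
  using received_iff_all_delivered [OF assms(1), of th S] assms(2,3) by auto

lemma path_agents_reach_root_sooner:
  assumes "info_tree I par" and "i \<in> {1..I}" and "j \<in> path_agents par i - {i}" and "(par ^^ n) i = 0"
  shows "\<exists>m<n. (par ^^ m) j = 0 \<and> j \<in> {1..I}"
proof -
  obtain k where j: "j = (par ^^ k) i" and nz: "\<forall>m\<le>k. (par ^^ m) i \<noteq> 0"
    using assms(3) unfolding path_agents_def by blast
  have "k \<noteq> 0" using j assms(3) by (metis DiffD2 funpow_0 singletonI)
  moreover have "k < n" using nz assms(4) by (meson not_le)
  moreover have "(par ^^ (n - k)) j = 0"
    using j assms(4) \<open>k < n\<close> funpow_add [of "n - k" k par] by simp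
  moreover have "j \<in> {1..I}" using funpow_par_in_agents [OF assms(1,2) nz] j by simp
  ultimately show ?thesis by (intro exI [of _ "n - k"]) auto
qed

text \<open>A seed is the last agent before the planner on the path from agent 1.\<close>

lemma seed_exists:
  assumes "info_tree I par" and "I \<ge> 1"
  shows "\<exists>s\<in>{1..I}. path_agents par s = {s}"
proof -
  have one: "(1::nat) \<in> {1..I}" using assms(2) by simp
  then obtain n where n: "(par ^^ n) 1 = 0" using assms(1) unfolding info_tree_def by blast
  define n0 where "n0 = (LEAST n. (par ^^ n) (1::nat) = 0)"
  have n0: "(par ^^ n0) 1 = 0" unfolding n0_def by (rule LeastI [of _ n]) (rule n)
  have before: "(par ^^ m) 1 \<noteq> 0" if "m < n0" for m
    using that unfolding n0_def by (rule not_less_Least)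
  have "n0 \<noteq> 0" using n0 by (metis funpow_0 one_neq_zero)
  define s where "s = (par ^^ (n0 - 1)) 1"
  have s: "s \<in> {1..I}"
    unfolding s_def by (rule funpow_par_in_agents [OF assms(1) one]) (use before \<open>n0 \<noteq> 0\<close> in auto)
  have "par s = 0"
    using n0 \<open>n0 \<noteq> 0\<close> unfolding s_def by (metis Suc_pred' funpow.simps(2) o_apply not_gr_zero)
  have "path_agents par s = {s}"
  proof (intro equalityI subsetI)
    fix x assume "x \<in> path_agents par s"
    then obtain k where x: "x = (par ^^ k) s" and nz: "\<forall>m\<le>k. (par ^^ m) s \<noteq> 0"
      unfolding path_agents_def by blast
    have "k = 0"
    proof (rule ccontr)
      assume "k \<noteq> 0"
      then have "(par ^^ 1) s \<noteq> 0" using nz by (metis One_nat_def less_one linorder_not_le)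
      then show False using \<open>par s = 0\<close> by simp
    qed
    then show "x \<in> {s}" using x by simp
  qed (use s self_in_path_agents in auto)
  then show ?thesis using s by blast
qed

section \<open>Incentives\<close>

definition act_prob_on :: "nat set \<Rightarrow> (nat \<Rightarrow> bool \<Rightarrow> real) \<Rightarrow> (nat \<Rightarrow> bool) \<Rightarrow> nat set \<Rightarrow> real" where
  "act_prob_on A \<sigma> x T = (\<Prod>j\<in>A. if j \<in> T then \<sigma> j (x j) else 1 - \<sigma> j (x j))"

lemma sum_act_prob_on:
  assumes "finite A"
  shows "(\<Sum>T\<in>Pow A. act_prob_on A \<sigma> x T) = 1"
proof -
  have "(\<Sum>T\<in>Pow A. act_prob_on A \<sigma> x T)
      = (\<Sum>T\<in>Pow A. (\<Prod>j\<in>T. \<sigma> j (x j)) * (\<Prod>j\<in>A - T. 1 - \<sigma> j (x j)))"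
  proof (rule sum.cong)
    fix T assume "T \<in> Pow A"
    then have "A \<inter> {j. j \<in> T} = T" and "A \<inter> - {j. j \<in> T} = A - T" by auto
    then show "act_prob_on A \<sigma> x T = (\<Prod>j\<in>T. \<sigma> j (x j)) * (\<Prod>j\<in>A - T. 1 - \<sigma> j (x j))"
      unfolding act_prob_on_def using prod.If_cases [OF assms] by metis
  qed simp
  also have "\<dots> = (\<Prod>j\<in>A. \<sigma> j (x j) + (1 - \<sigma> j (x j)))"
    by (rule prod_add [symmetric]) fact
  finally show ?thesis by simp
qed

lemma sum_Pow_insert:
  assumes "finite V" and "i \<notin> V"
  shows "(\<Sum>T\<in>Pow (insert i V). f T) = (\<Sum>T\<in>Pow V. f T + f (insert i T))"
proof -
  have "inj_on (insert i) (Pow V)"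
    using assms(2) by (intro inj_onI) (metis Pow_iff insert_ident subset_iff)
  moreover have "Pow V \<inter> insert i ` Pow V = {}" using assms(2) by auto
  ultimately show ?thesis
    unfolding Pow_insert using assms(1)
    by (simp add: sum.union_disjoint sum.reindex sum.distrib)
qed

lemma act_prob_remove_agent:
  assumes "i \<in> {1..I}" and "T \<subseteq> {1..I} - {i}"
  shows "act_prob I \<sigma> x T = (1 - \<sigma> i (x i)) * act_prob_on ({1..I} - {i}) \<sigma> x T"
    and "act_prob I \<sigma> x (insert i T) = \<sigma> i (x i) * act_prob_on ({1..I} - {i}) \<sigma> x T"
proof -
  have remove: "act_prob I \<sigma> x T' = (if i \<in> T' then \<sigma> i (x i) else 1 - \<sigma> i (x i))
      * act_prob_on ({1..I} - {i}) \<sigma> x T'" for T'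
    unfolding act_prob_def act_prob_on_def using assms(1) by (simp add: prod.remove)
  have "i \<notin> T" using assms(2) by auto
  then show "act_prob I \<sigma> x T = (1 - \<sigma> i (x i)) * act_prob_on ({1..I} - {i}) \<sigma> x T"
    using remove by simp
  have "act_prob_on ({1..I} - {i}) \<sigma> x (insert i T) = act_prob_on ({1..I} - {i}) \<sigma> x T"
    unfolding act_prob_on_def by (intro prod.cong) auto
  then show "act_prob I \<sigma> x (insert i T) = \<sigma> i (x i) * act_prob_on ({1..I} - {i}) \<sigma> x T"
    using remove by simp
qed

lemma potP_insert_diff:
  assumes "i \<in> {1..I}" and "T \<subseteq> {1..I} - {i}"
  shows "potP I w \<gamma> th (insert i T) - potP I w \<gamma> th T
       = - \<gamma> + (if th \<and> T = {1..I} - {i} then w + \<gamma> * real I else 0)"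
proof -
  have fin: "finite T" and "i \<notin> T" using assms(2) finite_subset by auto
  then have card_ins: "card (insert i T) = card T + 1" by simp
  have card_rest: "card ({1..I} - {i}) = I - 1" using assms(1) by simp
  have "card T \<le> I - 1" using card_mono [OF _ assms(2)] card_rest by simp
  moreover have "card T = I - 1 \<longleftrightarrow> T = {1..I} - {i}"
    using card_subset_eq [OF _ assms(2)] card_rest by auto
  moreover have "I \<ge> 1" using assms(1) by simp
  ultimately show ?thesis
    unfolding potP_def card_ins by (auto simp: of_nat_diff algebra_simps)
qed

lemma class_P_gain:
  assumes "in_class_P I w \<gamma> u" and "i \<in> {1..I}" and "T \<subseteq> {1..I} - {i}"
  shows "u th True (card T) - u th False (card T)
       = - \<gamma> + (if th \<and> T = {1..I} - {i} then w + \<gamma> * real I else 0)"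
proof -
  have "T - {i} = T" and "T \<subseteq> {1..I}" using assms(3) by auto
  then have "u th True (card T) - u th False (card T)
      = potP I w \<gamma> th (set_act i True T) - potP I w \<gamma> th (set_act i False T)"
    using assms(1,2) unfolding in_class_P_def by metis
  also have "\<dots> = potP I w \<gamma> th (insert i T) - potP I w \<gamma> th T"
    unfolding set_act_def using \<open>T - {i} = T\<close> by simp
  finally show ?thesis using potP_insert_diff [OF assms(2,3)] by simp
qed

definition payoff_of_abstaining ::
  "nat \<Rightarrow> (bool \<Rightarrow> bool \<Rightarrow> nat \<Rightarrow> real) \<Rightarrow> (nat \<Rightarrow> bool \<Rightarrow> real) \<Rightarrow> (nat \<Rightarrow> bool) \<Rightarrow> bool \<Rightarrow> nat \<Rightarrow> real"
where
  "payoff_of_abstaining I u \<sigma> x th i =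
     (\<Sum>T\<in>Pow ({1..I} - {i}). act_prob_on ({1..I} - {i}) \<sigma> x T * u th False (card T))"

lemma expected_gain_of_playing_one:
  assumes "in_class_P I w \<gamma> u" and i: "i \<in> {1..I}"
  shows "(\<Sum>T\<in>Pow ({1..I} - {i}). act_prob_on ({1..I} - {i}) \<sigma> x T * (u th True (card T) - u th False (card T)))
       = - \<gamma> + (if th then (w + \<gamma> * real I) * (\<Prod>j\<in>{1..I} - {i}. \<sigma> j (x j)) else 0)"
proof -
  define V where "V = {1..I} - {i}"
  define q where "q T = act_prob_on V \<sigma> x T" for T
  have "(\<Sum>T\<in>Pow V. q T * (u th True (card T) - u th False (card T)))
      = (\<Sum>T\<in>Pow V. q T * (- \<gamma>) + (if T = V then (if th then (w + \<gamma> * real I) * q V else 0) else 0))"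
  proof (rule sum.cong)
    fix T assume "T \<in> Pow V"
    then have "T \<subseteq> {1..I} - {i}" unfolding V_def by simp
    from class_P_gain [OF assms this, of th]
    have "q T * (u th True (card T) - u th False (card T))
        = q T * (- \<gamma> + (if th \<and> T = V then w + \<gamma> * real I else 0))"
      unfolding V_def by simp
    then show "q T * (u th True (card T) - u th False (card T))
        = q T * (- \<gamma>) + (if T = V then (if th then (w + \<gamma> * real I) * q V else 0) else 0)"
      by (cases "T = V") (auto simp: algebra_simps)
  qed simp
  also have "\<dots> = - \<gamma> + (if th then (w + \<gamma> * real I) * q V else 0)"
  proof -
    have "finite V" unfolding V_def by simp
    moreover from this have "(\<Sum>T\<in>Pow V. q T) = 1" unfolding q_def by (rule sum_act_prob_on)
    ultimately show ?thesis
      by (simp only: sum.distrib sum.delta' Pow_iff subset_refl if_True finite_Pow_iff flip: sum_distrib_right) simp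
  qed
  also have "q V = (\<Prod>j\<in>{1..I} - {i}. \<sigma> j (x j))" unfolding q_def act_prob_on_def V_def by simp
  finally show ?thesis unfolding q_def V_def .
qed

lemma expected_payoff_given_observations:
  assumes "in_class_P I w \<gamma> u" and i: "i \<in> {1..I}"
  shows "(\<Sum>T\<in>Pow {1..I}. act_prob I \<sigma> x T * u th (i \<in> T) (card (T - {i})))
       = payoff_of_abstaining I u \<sigma> x th i + \<sigma> i (x i) *
           (- \<gamma> + (if th then (w + \<gamma> * real I) * (\<Prod>j\<in>{1..I} - {i}. \<sigma> j (x j)) else 0))"
proof -
  define V where "V = {1..I} - {i}"
  define q where "q T = act_prob_on V \<sigma> x T" for T
  have V: "finite V" "i \<notin> V" "{1..I} = insert i V" using i unfolding V_def by auto
  have "(\<Sum>T\<in>Pow {1..I}. act_prob I \<sigma> x T * u th (i \<in> T) (card (T - {i})))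
      = (\<Sum>T\<in>Pow V. q T * u th False (card T) + \<sigma> i (x i) * (q T * (u th True (card T) - u th False (card T))))"
    unfolding V(3) sum_Pow_insert [OF V(1,2)]
  proof (rule sum.cong)
    fix T assume "T \<in> Pow V"
    then have T: "T \<subseteq> {1..I} - {i}" "i \<notin> T" "insert i T - {i} = T" using V_def by auto
    show "act_prob I \<sigma> x T * u th (i \<in> T) (card (T - {i}))
          + act_prob I \<sigma> x (insert i T) * u th (i \<in> insert i T) (card (insert i T - {i}))
        = q T * u th False (card T) + \<sigma> i (x i) * (q T * (u th True (card T) - u th False (card T)))"
      unfolding act_prob_remove_agent [OF i T(1)] q_def V_def using T by (simp add: algebra_simps)
  qed simp
  also have "\<dots> = payoff_of_abstaining I u \<sigma> x th i + \<sigma> i (x i) *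
      (\<Sum>T\<in>Pow V. q T * (u th True (card T) - u th False (card T)))"
    unfolding payoff_of_abstaining_def sum.distrib sum_distrib_left q_def V_def ..
  finally show ?thesis unfolding q_def V_def expected_gain_of_playing_one [OF assms] .
qed

definition prob_others_play_one ::
  "nat \<Rightarrow> (nat \<Rightarrow> nat) \<Rightarrow> (nat \<Rightarrow> bool \<Rightarrow> real) \<Rightarrow> nat \<Rightarrow> bool \<Rightarrow> nat set \<Rightarrow> real"
where
  "prob_others_play_one I par \<sigma> i th S = (\<Prod>j\<in>{1..I} - {i}. \<sigma> j (received par th S j))"

text \<open>Agent i's expected gain from switching to action 1 on observation b, weighted by the
  probability of observing b, when B th S is the probability that all other agents play 1
  in state (th, S).\<close>

definition incentive_against ::
  "nat \<Rightarrow> real \<Rightarrow> real \<Rightarrow> real \<Rightarrow> real \<Rightarrow> (nat \<Rightarrow> nat) \<Rightarrow> nat \<Rightarrow> bool \<Rightarrow> (bool \<Rightarrow> nat set \<Rightarrow> real) \<Rightarrow> real"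
where
  "incentive_against I \<rho> \<epsilon> w \<gamma> par i b B = expect I \<rho> \<epsilon> (\<lambda>th S.
     if received par th S i = b then - \<gamma> + (if th then (w + \<gamma> * real I) * B th S else 0) else 0)"

definition incentive ::
  "nat \<Rightarrow> real \<Rightarrow> real \<Rightarrow> real \<Rightarrow> real \<Rightarrow> (nat \<Rightarrow> nat) \<Rightarrow> (nat \<Rightarrow> bool \<Rightarrow> real) \<Rightarrow> nat \<Rightarrow> bool \<Rightarrow> real"
where
  "incentive I \<rho> \<epsilon> w \<gamma> par \<sigma> i b = incentive_against I \<rho> \<epsilon> w \<gamma> par i b (prob_others_play_one I par \<sigma> i)"

lemma payoff_of_abstaining_upd [simp]:
  "payoff_of_abstaining I u (\<sigma>(i := \<tau>)) x th i = payoff_of_abstaining I u \<sigma> x th i"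
  unfolding payoff_of_abstaining_def act_prob_on_def
  by (intro sum.cong refl arg_cong2 [where f = "(*)"] prod.cong) auto

lemma prob_others_play_one_upd [simp]:
  "prob_others_play_one I par (\<sigma>(i := \<tau>)) i th S = prob_others_play_one I par \<sigma> i th S"
  unfolding prob_others_play_one_def by (intro prod.cong) auto

lemma exp_payoff_decomp:
  assumes "in_class_P I w \<gamma> u" and "i \<in> {1..I}"
  shows "exp_payoff I \<rho> \<epsilon> par u \<sigma> i = expect I \<rho> \<epsilon> (\<lambda>th S.
           payoff_of_abstaining I u \<sigma> (received par th S) th i + \<sigma> i (received par th S i) *
           (- \<gamma> + (if th then (w + \<gamma> * real I) * prob_others_play_one I par \<sigma> i th S else 0)))"
  unfolding exp_payoff_def expect_def prob_others_play_one_def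
  using expected_payoff_given_observations [OF assms] by simp

lemma exp_payoff_deviation:
  assumes "in_class_P I w \<gamma> u" and "i \<in> {1..I}"
  shows "exp_payoff I \<rho> \<epsilon> par u (\<sigma>(i := \<tau>)) i - exp_payoff I \<rho> \<epsilon> par u \<sigma> i
       = (\<tau> True - \<sigma> i True) * incentive I \<rho> \<epsilon> w \<gamma> par \<sigma> i True
         + (\<tau> False - \<sigma> i False) * incentive I \<rho> \<epsilon> w \<gamma> par \<sigma> i False"
proof -
  define E where "E th S = - \<gamma> + (if th then (w + \<gamma> * real I) * prob_others_play_one I par \<sigma> i th S else 0)"
    for th S
  define x where "x th S = received par th S i" for th S
  have "exp_payoff I \<rho> \<epsilon> par u (\<sigma>(i := \<tau>)) i - exp_payoff I \<rho> \<epsilon> par u \<sigma> i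
      = expect I \<rho> \<epsilon> (\<lambda>th S. \<tau> (x th S) * E th S) - expect I \<rho> \<epsilon> (\<lambda>th S. \<sigma> i (x th S) * E th S)"
    unfolding exp_payoff_decomp [OF assms] E_def x_def by (simp cong: if_cong)
  also have "\<dots> = expect I \<rho> \<epsilon> (\<lambda>th S.
        (\<tau> True - \<sigma> i True) * (if x th S = True then E th S else 0)
      + (\<tau> False - \<sigma> i False) * (if x th S = False then E th S else 0))"
    unfolding expect_diff [symmetric] by (intro arg_cong [where f = "expect I \<rho> \<epsilon>"] ext)
      (auto simp: algebra_simps)
  finally show ?thesis unfolding incentive_def incentive_against_def E_def x_def by simp
qed

lemma BNE_incentive_neg_imp_zero:
  assumes "in_class_P I w \<gamma> u" and i: "i \<in> {1..I}" and BNE: "BNE I \<rho> \<epsilon> par u \<sigma>"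
    and "incentive I \<rho> \<epsilon> w \<gamma> par \<sigma> i b < 0"
  shows "\<sigma> i b = 0"
proof -
  define \<tau> where "\<tau> = (\<sigma> i)(b := 0)"
  have mixed: "0 \<le> \<sigma> i x \<and> \<sigma> i x \<le> 1" for x
    using BNE i unfolding BNE_def mixed_profile_def by blast
  then have "exp_payoff I \<rho> \<epsilon> par u (\<sigma>(i := \<tau>)) i \<le> exp_payoff I \<rho> \<epsilon> par u \<sigma> i"
    using BNE i unfolding BNE_def \<tau>_def by simp
  then have "- \<sigma> i b * incentive I \<rho> \<epsilon> w \<gamma> par \<sigma> i b \<le> 0"
    using exp_payoff_deviation [OF assms(1) i, of \<rho> \<epsilon> par \<sigma> \<tau>] unfolding \<tau>_def by (cases b) auto
  then show ?thesis
    using assms(4) mixed [of b] by (auto simp: zero_le_mult_iff)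
qed

lemma BNE_by_incentives:
  assumes "in_class_P I w \<gamma> u" and "mixed_profile I \<sigma>"
    and "\<And>i b. i \<in> {1..I} \<Longrightarrow> (\<sigma> i b = 1 \<and> 0 \<le> incentive I \<rho> \<epsilon> w \<gamma> par \<sigma> i b)
                               \<or> (\<sigma> i b = 0 \<and> incentive I \<rho> \<epsilon> w \<gamma> par \<sigma> i b \<le> 0)"
  shows "BNE I \<rho> \<epsilon> par u \<sigma>"
  unfolding BNE_def
proof (intro conjI assms(2) ballI allI impI)
  fix i \<tau> assume i: "i \<in> {1..I}" and \<tau>: "\<forall>x::bool. 0 \<le> \<tau> x \<and> \<tau> x \<le> (1::real)"
  have "(\<tau> b - \<sigma> i b) * incentive I \<rho> \<epsilon> w \<gamma> par \<sigma> i b \<le> 0" for b :: bool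
    using assms(3) [OF i, of b] \<tau> by (auto simp: mult_le_0_iff)
  then show "exp_payoff I \<rho> \<epsilon> par u (\<sigma>(i := \<tau>)) i \<le> exp_payoff I \<rho> \<epsilon> par u \<sigma> i"
    using exp_payoff_deviation [OF assms(1) i, of \<rho> \<epsilon> par \<sigma> \<tau>] by (smt (verit))
qed

lemma incentive_against_mono:
  assumes "0 \<le> \<rho>" "\<rho> \<le> 1" "0 \<le> \<epsilon>" "\<epsilon> \<le> 1" and "0 \<le> w + \<gamma> * real I"
    and "\<And>th S. S \<subseteq> {1..I} \<Longrightarrow> received par th S i = b \<Longrightarrow> th \<Longrightarrow> B th S \<le> B' th S"
  shows "incentive_against I \<rho> \<epsilon> w \<gamma> par i b B \<le> incentive_against I \<rho> \<epsilon> w \<gamma> par i b B'"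
  unfolding incentive_against_def
  using assms mult_left_mono [OF assms(6) assms(5)] by (intro expect_mono) auto

lemma incentive_against_received:
  assumes "info_tree I par" and "i \<in> {1..I}" and "R \<subseteq> {1..I}"
  shows "incentive_against I \<rho> \<epsilon> w \<gamma> par i True (\<lambda>th S. of_bool (R \<subseteq> S))
       = - \<gamma> * \<rho> * (1 - \<epsilon>) ^ card (path_agents par i)
         + (w + \<gamma> * real I) * \<rho> * (1 - \<epsilon>) ^ card (path_agents par i \<union> R)"
proof -
  define P where "P = path_agents par i"
  have P: "P \<subseteq> {1..I}" using path_agents_subset [OF assms(1,2)] P_def by simp
  have "incentive_against I \<rho> \<epsilon> w \<gamma> par i True (\<lambda>th S. of_bool (R \<subseteq> S))
      = expect I \<rho> \<epsilon> (\<lambda>th S. - \<gamma> * of_bool (th \<and> P \<subseteq> S) + (w + \<gamma> * real I) * of_bool (th \<and> P \<union> R \<subseteq> S))"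
    unfolding incentive_against_def received_def P_def by (intro arg_cong [where f = "expect I \<rho> \<epsilon>"] ext) auto
  also have "\<dots> = - \<gamma> * \<rho> * (1 - \<epsilon>) ^ card P + (w + \<gamma> * real I) * \<rho> * (1 - \<epsilon>) ^ card (P \<union> R)"
    unfolding expect_add expect_cmult expect_good_and_delivered [OF P]
      expect_good_and_delivered [OF Un_least [OF P assms(3)]] by simp
  finally show ?thesis unfolding P_def .
qed

lemma incentive_against_not_received:
  assumes "info_tree I par" and "i \<in> {1..I}" and "R \<subseteq> path_agents par i"
  shows "incentive_against I \<rho> \<epsilon> w \<gamma> par i False (\<lambda>th S. of_bool (R \<subseteq> S))
       = - \<gamma> + (\<gamma> - (w + \<gamma> * real I)) * \<rho> * (1 - \<epsilon>) ^ card (path_agents par i)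
         + (w + \<gamma> * real I) * \<rho> * (1 - \<epsilon>) ^ card R"
proof -
  define P where "P = path_agents par i"
  have P: "P \<subseteq> {1..I}" using path_agents_subset [OF assms(1,2)] P_def by simp
  have "incentive_against I \<rho> \<epsilon> w \<gamma> par i False (\<lambda>th S. of_bool (R \<subseteq> S))
      = expect I \<rho> \<epsilon> (\<lambda>th S. - \<gamma> * 1 + (\<gamma> - (w + \<gamma> * real I)) * of_bool (th \<and> P \<subseteq> S)
                            + (w + \<gamma> * real I) * of_bool (th \<and> R \<subseteq> S))"
    unfolding incentive_against_def received_def P_def
    using assms(3) by (intro arg_cong [where f = "expect I \<rho> \<epsilon>"] ext) auto
  also have "\<dots> = - \<gamma> + (\<gamma> - (w + \<gamma> * real I)) * \<rho> * (1 - \<epsilon>) ^ card P + (w + \<gamma> * real I) * \<rho> * (1 - \<epsilon>) ^ card R"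
    using P assms(3) unfolding P_def by (simp add: expect_good_and_delivered)
  finally show ?thesis unfolding P_def .
qed

lemma prob_others_play_one_le:
  assumes "i \<in> {1..I}" and "Q \<subseteq> {1..I} - {i}"
    and mixed: "\<And>j x. j \<in> {1..I} \<Longrightarrow> 0 \<le> \<sigma> j x \<and> \<sigma> j x \<le> 1"
    and "\<And>j. j \<in> Q \<Longrightarrow> \<sigma> j False = 0"
  shows "prob_others_play_one I par \<sigma> i th S \<le> of_bool (Q \<subseteq> S)"
proof (cases "Q \<subseteq> S")
  case True
  have "prob_others_play_one I par \<sigma> i th S \<le> 1"
    unfolding prob_others_play_one_def using mixed by (intro prod_le_1) auto
  then show ?thesis using True by simp
next
  case False
  then obtain j where j: "j \<in> Q" "j \<notin> S" by auto
  then have "\<sigma> j (received par th S j) = 0"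
    using assms(2,4) received_imp_delivered [of j par th S] by (cases "received par th S j") auto
  then have "prob_others_play_one I par \<sigma> i th S = 0"
    unfolding prob_others_play_one_def using j assms(2) by (intro prod_zero) auto
  then show ?thesis by simp
qed

section \<open>The thresholds\<close>

lemma q1_denominator_pos:
  fixes \<rho> e :: real
  assumes "0 < \<rho>" "\<rho> < 1" "0 \<le> e" "e \<le> 1"
  shows "0 < 1 - \<rho> * (1 - e)"
proof -
  have "\<rho> * (1 - e) \<le> \<rho>" using assms by (intro mult_left_le) auto
  then show ?thesis using assms by linarith
qed

lemma q1_strict_mono:
  assumes "0 < \<rho>" "\<rho> < 1" and "0 \<le> e1" "e1 < e2" "e2 \<le> 1"
  shows "q1 \<rho> e1 < q1 \<rho> e2"
proof -
  define d1 where "d1 = 1 - \<rho> * (1 - e1)"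
  define d2 where "d2 = 1 - \<rho> * (1 - e2)"
  have "0 < d1" "0 < d2" unfolding d1_def d2_def using assms by (intro q1_denominator_pos; simp)+
  moreover have "\<rho> * e1 * d2 < \<rho> * e2 * d1"
  proof -
    have "\<rho> * (1 - \<rho>) * e1 < \<rho> * (1 - \<rho>) * e2" using assms by simp
    then show ?thesis unfolding d1_def d2_def by (simp add: algebra_simps)
  qed
  ultimately show ?thesis unfolding q1_def d1_def [symmetric] d2_def [symmetric]
    by (simp add: divide_less_eq less_divide_eq mult_ac)
qed

lemma q2_antimono: "e1 \<le> e2 \<Longrightarrow> e2 \<le> 1 \<Longrightarrow> q2 I e2 \<le> q2 I e1"
  unfolding q2_def by (intro power_mono) auto

lemma epsbar_root:
  assumes "I \<ge> 2" and "0 < \<rho>" "\<rho> < 1"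
  shows "0 < epsbar I \<rho> \<and> epsbar I \<rho> < 1 \<and> q1 \<rho> (epsbar I \<rho>) = q2 I (epsbar I \<rho>)"
proof -
  define f where "f e = q1 \<rho> e - q2 I e" for e
  have f0: "f 0 = -1" unfolding f_def q1_def q2_def by simp
  have f1: "f 1 = \<rho>" unfolding f_def q1_def q2_def using assms(1) by (simp add: power_0_left)
  have "isCont f x" if "0 \<le> x" "x \<le> 1" for x
    using q1_denominator_pos [OF assms(2,3) that] unfolding f_def q1_def q2_def
    by (intro continuous_intros) auto
  then obtain e0 where e0: "0 \<le> e0" "e0 \<le> 1" "f e0 = 0"
    using IVT [of f 0 0 1] f0 f1 assms(2) by auto
  with f0 f1 assms(2) have e0_open: "0 < e0" "e0 < 1" by (auto simp: order_le_less)
  have f_mono: "f x < f y" if "0 \<le> x" "x < y" "y \<le> 1" for x y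
    using q1_strict_mono [OF assms(2,3) that] q2_antimono [of x y I] that unfolding f_def by simp
  have "\<exists>!e. 0 < e \<and> e < 1 \<and> q1 \<rho> e = q2 I e"
  proof (rule ex1I [of _ e0])
    show "0 < e0 \<and> e0 < 1 \<and> q1 \<rho> e0 = q2 I e0" using e0 e0_open unfolding f_def by simp
  next
    fix e assume "0 < e \<and> e < 1 \<and> q1 \<rho> e = q2 I e"
    then show "e = e0"
      using f_mono [of e e0] f_mono [of e0 e] e0 e0_open unfolding f_def
      by (cases e e0 rule: linorder_cases) auto
  qed
  then show ?thesis unfolding epsbar_def by (rule theI')
qed

lemma q1_less_q2:
  assumes "I \<ge> 2" and "0 < \<rho>" "\<rho> < 1" and "0 < \<epsilon>" and "\<epsilon> < epsbar I \<rho>"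
  shows "q1 \<rho> \<epsilon> < q2 I \<epsilon>"
proof -
  have "q1 \<rho> \<epsilon> - q2 I \<epsilon> < q1 \<rho> (epsbar I \<rho>) - q2 I (epsbar I \<rho>)"
    using epsbar_root [OF assms(1-3)] assms(4,5) q1_strict_mono [OF assms(2,3), of \<epsilon> "epsbar I \<rho>"]
      q2_antimono [of \<epsilon> "epsbar I \<rho>" I] by simp
  then show ?thesis using epsbar_root [OF assms(1-3)] by simp
qed

lemma cost_ratio_le_q1_iff:
  assumes "0 < c" and "0 < \<rho>" "\<rho> < 1" and "0 < \<epsilon>" "\<epsilon> < 1"
  shows "\<gamma> / c \<le> q1 \<rho> \<epsilon> \<longleftrightarrow> \<gamma> * (1 - \<rho> * (1 - \<epsilon>)) \<le> c * \<rho> * \<epsilon>"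
  using q1_denominator_pos [of \<rho> \<epsilon>] assms unfolding q1_def
  by (simp add: divide_le_eq le_divide_eq mult_ac)

lemma cost_ratio_le_q2_iff:
  assumes "0 < c"
  shows "\<gamma> / c \<le> q2 I \<epsilon> \<longleftrightarrow> \<gamma> \<le> c * (1 - \<epsilon>) ^ (I - 1)"
  unfolding q2_def using assms by (simp add: divide_le_eq mult.commute)

section \<open>Equilibria\<close>

lemma coord_prob_eq_expect:
  "coord_prob I \<rho> \<epsilon> par \<sigma> = expect I \<rho> \<epsilon> (\<lambda>th S. \<Prod>j\<in>{1..I}. \<sigma> j (received par th S j))"
  unfolding coord_prob_def expect_def ..

lemma coord_prob_le_one:
  assumes "0 < \<rho>" "\<rho> < 1" "0 < \<epsilon>" "\<epsilon> < 1"
    and "\<And>j x. j \<in> {1..I} \<Longrightarrow> 0 \<le> \<sigma> j x \<and> \<sigma> j x \<le> 1"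
  shows "coord_prob I \<rho> \<epsilon> par \<sigma> \<le> 1"
proof -
  have "coord_prob I \<rho> \<epsilon> par \<sigma> \<le> expect I \<rho> \<epsilon> (\<lambda>th S. 1)"
    unfolding coord_prob_eq_expect using assms by (intro expect_mono prod_le_1) auto
  then show ?thesis by simp
qed

lemma coord_prob_le_all_delivered:
  assumes "info_tree I par" and "I \<ge> 1" and "0 < \<rho>" "\<rho> < 1" "0 < \<epsilon>" "\<epsilon> < 1"
    and mixed: "\<And>j x. j \<in> {1..I} \<Longrightarrow> 0 \<le> \<sigma> j x \<and> \<sigma> j x \<le> 1"
    and uninformed: "\<And>j. j \<in> {1..I} \<Longrightarrow> \<sigma> j False = 0"
  shows "coord_prob I \<rho> \<epsilon> par \<sigma> \<le> \<rho> * (1 - \<epsilon>) ^ I"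
proof -
  have bound: "(\<Prod>j\<in>{1..I}. \<sigma> j (received par th S j)) \<le> of_bool (th \<and> {1..I} \<subseteq> S)" for th S
  proof (cases "th \<and> {1..I} \<subseteq> S")
    case True
    have "(\<Prod>j\<in>{1..I}. \<sigma> j (received par th S j)) \<le> 1" using mixed by (intro prod_le_1) auto
    then show ?thesis using True by simp
  next
    case False
    then obtain j where "j \<in> {1..I}" "\<not> received par th S j"
      using received_iff_all_delivered [OF assms(1,2)] by blast
    then have "(\<Prod>j\<in>{1..I}. \<sigma> j (received par th S j)) = 0"
      using uninformed by (intro prod_zero) force+
    then show ?thesis using False by (simp del: prod_zero_iff)
  qed
  have "coord_prob I \<rho> \<epsilon> par \<sigma> \<le> expect I \<rho> \<epsilon> (\<lambda>th S. of_bool (th \<and> {1..I} \<subseteq> S))"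
    unfolding coord_prob_eq_expect using assms(3-6) by (intro expect_mono bound) auto
  then show ?thesis using expect_good_and_delivered [of "{1..I}" I \<rho> \<epsilon>] by simp
qed

lemma coord_prob_eq_zero:
  assumes "s \<in> {1..I}" and "\<sigma> s True = 0" "\<sigma> s False = 0"
  shows "coord_prob I \<rho> \<epsilon> par \<sigma> = 0"
proof -
  have "\<sigma> s b = 0" for b using assms(2,3) by (cases b) auto
  then have "(\<lambda>th S. \<Prod>j\<in>{1..I}. \<sigma> j (received par th S j)) = (\<lambda>th S. 0)"
    using assms(1) by (intro ext prod_zero) force+
  then show ?thesis unfolding coord_prob_eq_expect by simp
qed

locale coordination_game =
  fixes I :: nat and \<rho> \<epsilon> w \<gamma> :: real
    and u :: "bool \<Rightarrow> bool \<Rightarrow> nat \<Rightarrow> real" and par :: "nat \<Rightarrow> nat"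
  assumes two_agents: "I \<ge> 2"
    and rho: "0 < \<rho>" "\<rho> < 1"
    and eps: "0 < \<epsilon>" "\<epsilon> < 1"
    and gamma: "0 < \<gamma>"
    and w_bound: "w > - (real I - 1) * \<gamma>"
    and class_P: "in_class_P I w \<gamma> u"
    and tree: "info_tree I par"
begin

abbreviation bonus :: real where "bonus \<equiv> w + \<gamma> * real I"

lemma gamma_less_bonus: "\<gamma> < bonus"
  using w_bound by (simp add: algebra_simps)

lemma BNE_mixed: "BNE I \<rho> \<epsilon> par u \<sigma> \<Longrightarrow> j \<in> {1..I} \<Longrightarrow> 0 \<le> \<sigma> j x \<and> \<sigma> j x \<le> 1"
  unfolding BNE_def mixed_profile_def by blast

lemma incentive_uninformed_neg:
  assumes i: "i \<in> {1..I}" and mixed: "\<And>j x. j \<in> {1..I} \<Longrightarrow> 0 \<le> \<sigma> j x \<and> \<sigma> j x \<le> 1"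
    and predecessors: "\<And>j. j \<in> path_agents par i - {i} \<Longrightarrow> \<sigma> j False = 0"
    and low_q1: "bonus * \<rho> * \<epsilon> < \<gamma> * (1 - \<rho> * (1 - \<epsilon>))"
  shows "incentive I \<rho> \<epsilon> w \<gamma> par \<sigma> i False < 0"
proof -
  define d where "d = card (path_agents par i)"
  define a where "a = 1 - \<epsilon>"
  define Q where "Q = path_agents par i - {i}"
  have d: "1 \<le> d" using card_path_agents_ge_1 [OF tree i] d_def by simp
  have Q: "Q \<subseteq> {1..I} - {i}" "Q \<subseteq> path_agents par i"
    using path_agents_subset [OF tree i] Q_def by auto
  have "finite (path_agents par i)" using path_agents_subset [OF tree i] finite_subset by blast
  then have card_Q: "card Q = d - 1"
    unfolding Q_def d_def using self_in_path_agents [of i par] i by simp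
  have "incentive I \<rho> \<epsilon> w \<gamma> par \<sigma> i False \<le> incentive_against I \<rho> \<epsilon> w \<gamma> par i False (\<lambda>th S. of_bool (Q \<subseteq> S))"
    unfolding incentive_def using rho eps gamma gamma_less_bonus predecessors Q_def
    by (intro incentive_against_mono prob_others_play_one_le [OF i Q(1) mixed]) auto
  also have "\<dots> = - \<gamma> + (\<gamma> - bonus) * \<rho> * a ^ d + bonus * \<rho> * a ^ (d - 1)"
    unfolding incentive_against_not_received [OF tree i Q(2)] card_Q a_def d_def ..
  also have "\<dots> = - \<gamma> + \<rho> * (\<gamma> * a + bonus * \<epsilon>) * a ^ (d - 1)"
    using d unfolding a_def by (cases d) (auto simp: algebra_simps)
  also have "\<dots> < 0"
  proof -
    have "0 < a ^ (d - 1)" "a ^ (d - 1) \<le> 1" using eps unfolding a_def by (auto intro: power_le_one)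
    moreover have "\<rho> * (\<gamma> * a + bonus * \<epsilon>) < \<gamma>" using low_q1 unfolding a_def by (simp add: algebra_simps)
    moreover have "0 \<le> \<rho> * (\<gamma> * a + bonus * \<epsilon>)"
      using rho eps gamma gamma_less_bonus unfolding a_def by simp
    ultimately have "\<rho> * (\<gamma> * a + bonus * \<epsilon>) * a ^ (d - 1) < \<gamma>"
      by (smt (verit) mult_left_le)
    then show ?thesis by simp
  qed
  finally show ?thesis .
qed

lemma BNE_uninformed_abstain:
  assumes BNE: "BNE I \<rho> \<epsilon> par u \<sigma>"
    and low_q1: "bonus * \<rho> * \<epsilon> < \<gamma> * (1 - \<rho> * (1 - \<epsilon>))"
    and i: "i \<in> {1..I}"
  shows "\<sigma> i False = 0"
proof -
  have "\<forall>i\<in>{1..I}. (par ^^ n) i = 0 \<longrightarrow> \<sigma> i False = 0" for n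
  proof (induction n rule: less_induct)
    case (less n)
    show ?case
    proof (intro ballI impI)
      fix i assume i: "i \<in> {1..I}" and n: "(par ^^ n) i = 0"
      have "\<sigma> j False = 0" if "j \<in> path_agents par i - {i}" for j
        using path_agents_reach_root_sooner [OF tree i that n] less.IH by blast
      then have "incentive I \<rho> \<epsilon> w \<gamma> par \<sigma> i False < 0"
        by (intro incentive_uninformed_neg [OF i _ _ low_q1] BNE_mixed [OF BNE])
      then show "\<sigma> i False = 0" by (rule BNE_incentive_neg_imp_zero [OF class_P i BNE])
    qed
  qed
  then show ?thesis using tree i unfolding info_tree_def by blast
qed

lemma incentive_seed_informed_neg:
  assumes s: "s \<in> {1..I}" "path_agents par s = {s}"
    and mixed: "\<And>j x. j \<in> {1..I} \<Longrightarrow> 0 \<le> \<sigma> j x \<and> \<sigma> j x \<le> 1"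
    and uninformed: "\<And>j. j \<in> {1..I} \<Longrightarrow> \<sigma> j False = 0"
    and high_q2: "bonus * (1 - \<epsilon>) ^ (I - 1) < \<gamma>"
  shows "incentive I \<rho> \<epsilon> w \<gamma> par \<sigma> s True < 0"
proof -
  have bound: "prob_others_play_one I par \<sigma> s th S \<le> of_bool ({1..I} \<subseteq> S)"
    if "received par th S s = True" for th S
  proof -
    have "s \<in> S" using that received_imp_delivered [of s par th S] s by auto
    then have "of_bool ({1..I} - {s} \<subseteq> S) = (of_bool ({1..I} \<subseteq> S) :: real)" by auto
    then show ?thesis
      using prob_others_play_one_le [of s I "{1..I} - {s}" \<sigma> par th S] s(1) mixed uninformed by simp
  qed
  have "incentive I \<rho> \<epsilon> w \<gamma> par \<sigma> s True \<le> incentive_against I \<rho> \<epsilon> w \<gamma> par s True (\<lambda>th S. of_bool ({1..I} \<subseteq> S))"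
    unfolding incentive_def using rho eps gamma gamma_less_bonus by (intro incentive_against_mono bound) auto
  also have "\<dots> = - \<gamma> * \<rho> * (1 - \<epsilon>) + bonus * \<rho> * (1 - \<epsilon>) ^ I"
    using incentive_against_received [OF tree s(1), of "{1..I}"] s by (simp add: insert_absorb)
  also have "\<dots> = \<rho> * (1 - \<epsilon>) * (bonus * (1 - \<epsilon>) ^ (I - 1) - \<gamma>)"
    using two_agents by (cases I) (auto simp: algebra_simps)
  also have "\<dots> < 0" using rho eps high_q2 by (simp add: mult_pos_neg)
  finally show ?thesis .
qed

lemma BNE_always_one:
  assumes low_q1: "\<gamma> * (1 - \<rho> * (1 - \<epsilon>)) \<le> bonus * \<rho> * \<epsilon>"
  shows "BNE I \<rho> \<epsilon> par u (\<lambda>j x. 1)" and "coord_prob I \<rho> \<epsilon> par (\<lambda>j x. 1) = 1"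
proof -
  show "BNE I \<rho> \<epsilon> par u (\<lambda>j x. 1)"
  proof (rule BNE_by_incentives [OF class_P])
    fix i b assume i: "i \<in> {1..I}"
    define d where "d = card (path_agents par i)"
    define a where "a = 1 - \<epsilon>"
    have d: "1 \<le> d" using card_path_agents_ge_1 [OF tree i] d_def by simp
    have a: "0 \<le> a" "a ^ d \<le> a" using eps power_decreasing [OF d, of a] unfolding a_def by auto
    have everyone: "incentive I \<rho> \<epsilon> w \<gamma> par (\<lambda>j x. 1) i b'
        = incentive_against I \<rho> \<epsilon> w \<gamma> par i b' (\<lambda>th S. of_bool ({} \<subseteq> S))" for b'
      unfolding incentive_def prob_others_play_one_def by simp
    have "0 \<le> incentive I \<rho> \<epsilon> w \<gamma> par (\<lambda>j x. 1) i b"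
    proof (cases b)
      case True
      have "incentive I \<rho> \<epsilon> w \<gamma> par (\<lambda>j x. 1) i True = (bonus - \<gamma>) * (\<rho> * a ^ d)"
        unfolding everyone incentive_against_received [OF tree i empty_subsetI] d_def a_def
        by (simp add: algebra_simps)
      moreover have "0 \<le> (bonus - \<gamma>) * (\<rho> * a ^ d)" using gamma_less_bonus rho a by simp
      ultimately show ?thesis using True by simp
    next
      case False
      have "(\<gamma> - bonus) * \<rho> * a \<le> (\<gamma> - bonus) * \<rho> * a ^ d"
        using gamma_less_bonus rho a by (intro mult_left_mono_neg) (auto simp: mult_le_0_iff)
      then have "0 \<le> - \<gamma> + (\<gamma> - bonus) * \<rho> * a ^ d + bonus * \<rho>"
        using low_q1 unfolding a_def by (simp add: algebra_simps)
      then have "0 \<le> incentive I \<rho> \<epsilon> w \<gamma> par (\<lambda>j x. 1) i False"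
        unfolding everyone incentive_against_not_received [OF tree i empty_subsetI] d_def a_def
        by simp
      then show ?thesis using False by simp
    qed
    then show "((\<lambda>j x. 1) i b = 1 \<and> 0 \<le> incentive I \<rho> \<epsilon> w \<gamma> par (\<lambda>j x. 1) i b)
        \<or> ((\<lambda>j x. 1) i b = 0 \<and> incentive I \<rho> \<epsilon> w \<gamma> par (\<lambda>j x. 1) i b \<le> 0)" by simp
  qed (simp add: mixed_profile_def)
  show "coord_prob I \<rho> \<epsilon> par (\<lambda>j x. 1) = 1" unfolding coord_prob_eq_expect by simp
qed

lemma incentive_follow_message_informed_nonneg:
  assumes i: "i \<in> {1..I}" and low_q2: "\<gamma> \<le> bonus * (1 - \<epsilon>) ^ (I - 1)"
  shows "0 \<le> incentive I \<rho> \<epsilon> w \<gamma> par (\<lambda>j x. of_bool x) i True"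
proof -
  define d where "d = card (path_agents par i)"
  have d: "1 \<le> d" using card_path_agents_ge_1 [OF tree i] d_def by simp
  have bound: "of_bool ({1..I} \<subseteq> S) \<le> prob_others_play_one I par (\<lambda>j x. of_bool x) i th S"
    if "received par th S i = True" "th" for th S
    using others_received_iff_all_delivered [OF tree i] that
    by (simp add: prob_others_play_one_def prod_of_bool)
  have "incentive_against I \<rho> \<epsilon> w \<gamma> par i True (\<lambda>th S. of_bool ({1..I} \<subseteq> S))
      \<le> incentive I \<rho> \<epsilon> w \<gamma> par (\<lambda>j x. of_bool x) i True"
    unfolding incentive_def using rho eps gamma gamma_less_bonus
    by (intro incentive_against_mono bound) auto
  moreover have "incentive_against I \<rho> \<epsilon> w \<gamma> par i True (\<lambda>th S. of_bool ({1..I} \<subseteq> S))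
      = - \<gamma> * \<rho> * (1 - \<epsilon>) ^ d + bonus * \<rho> * (1 - \<epsilon>) ^ I"
    using incentive_against_received [OF tree i, of "{1..I}"] path_agents_subset [OF tree i]
    unfolding d_def by (simp add: Un_absorb1)
  moreover have "\<gamma> * \<rho> * (1 - \<epsilon>) ^ d \<le> bonus * \<rho> * (1 - \<epsilon>) ^ I"
  proof -
    have "\<gamma> * (1 - \<epsilon>) ^ d \<le> \<gamma> * (1 - \<epsilon>)"
      using gamma eps power_decreasing [OF d, of "1 - \<epsilon>"] by simp
    also have "\<dots> \<le> bonus * (1 - \<epsilon>) ^ (I - 1) * (1 - \<epsilon>)" using low_q2 eps by simp
    also have "\<dots> = bonus * (1 - \<epsilon>) ^ I" using two_agents by (cases I) auto
    finally show ?thesis using rho by (simp add: mult_ac)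
  qed
  ultimately show ?thesis by simp
qed

lemma BNE_follow_message:
  assumes low_q1: "bonus * \<rho> * \<epsilon> < \<gamma> * (1 - \<rho> * (1 - \<epsilon>))"
    and low_q2: "\<gamma> \<le> bonus * (1 - \<epsilon>) ^ (I - 1)"
  shows "BNE I \<rho> \<epsilon> par u (\<lambda>j x. of_bool x)" and "coord_prob I \<rho> \<epsilon> par (\<lambda>j x. of_bool x) = \<rho> * (1 - \<epsilon>) ^ I"
proof -
  show "BNE I \<rho> \<epsilon> par u (\<lambda>j x. of_bool x)"
  proof (rule BNE_by_incentives [OF class_P])
    fix i b assume i: "i \<in> {1..I}"
    have "incentive I \<rho> \<epsilon> w \<gamma> par (\<lambda>j x. of_bool x) i False < 0"
      using low_q1 by (intro incentive_uninformed_neg [OF i]) auto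
    then show "((\<lambda>j x. of_bool x) i b = 1 \<and> 0 \<le> incentive I \<rho> \<epsilon> w \<gamma> par (\<lambda>j x. of_bool x) i b)
        \<or> ((\<lambda>j x. of_bool x) i b = 0 \<and> incentive I \<rho> \<epsilon> w \<gamma> par (\<lambda>j x. of_bool x) i b \<le> 0)"
      using incentive_follow_message_informed_nonneg [OF i low_q2] by (cases b) auto
  qed (simp add: mixed_profile_def)
  have "I \<ge> 1" using two_agents by simp
  then have "coord_prob I \<rho> \<epsilon> par (\<lambda>j x. of_bool x) = expect I \<rho> \<epsilon> (\<lambda>th S. of_bool (th \<and> {1..I} \<subseteq> S))"
    unfolding coord_prob_eq_expect using received_iff_all_delivered [OF tree] by (simp add: prod_of_bool)
  then show "coord_prob I \<rho> \<epsilon> par (\<lambda>j x. of_bool x) = \<rho> * (1 - \<epsilon>) ^ I"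
    using expect_good_and_delivered [of "{1..I}" I \<rho> \<epsilon>] by simp
qed

lemma BNE_never_one:
  shows "BNE I \<rho> \<epsilon> par u (\<lambda>j x. 0)" and "coord_prob I \<rho> \<epsilon> par (\<lambda>j x. 0) = 0"
proof -
  show "BNE I \<rho> \<epsilon> par u (\<lambda>j x. 0)"
  proof (rule BNE_by_incentives [OF class_P])
    fix i b assume i: "i \<in> {1..I}"
    have "card ({1..I} - {i}) = I - 1" using i by simp
    then have "prob_others_play_one I par (\<lambda>j x. 0) i = (\<lambda>th S. 0)"
      unfolding prob_others_play_one_def using two_agents by (simp add: fun_eq_iff)
    then have "incentive I \<rho> \<epsilon> w \<gamma> par (\<lambda>j x. 0) i b = incentive_against I \<rho> \<epsilon> w \<gamma> par i b (\<lambda>th S. 0)"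
      unfolding incentive_def by simp
    also have "\<dots> \<le> expect I \<rho> \<epsilon> (\<lambda>th S. 0)"
      unfolding incentive_against_def using rho eps gamma by (intro expect_mono) auto
    finally show "((\<lambda>j x. 0) i b = 1 \<and> 0 \<le> incentive I \<rho> \<epsilon> w \<gamma> par (\<lambda>j x. 0) i b)
        \<or> ((\<lambda>j x. 0) i b = 0 \<and> incentive I \<rho> \<epsilon> w \<gamma> par (\<lambda>j x. 0) i b \<le> 0)" by simp
  qed (simp add: mixed_profile_def)
  show "coord_prob I \<rho> \<epsilon> par (\<lambda>j x. 0) = 0"
    using two_agents by (intro coord_prob_eq_zero [of 1]) auto
qed

lemma bonus_pos: "0 < bonus"
  using gamma gamma_less_bonus by linarith

lemma max_coord_prob_low_cost:
  assumes "\<gamma> / bonus \<le> q1 \<rho> \<epsilon>"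
  shows "(\<exists>\<sigma>. BNE I \<rho> \<epsilon> par u \<sigma> \<and> coord_prob I \<rho> \<epsilon> par \<sigma> = 1)
       \<and> (\<forall>\<sigma>. BNE I \<rho> \<epsilon> par u \<sigma> \<longrightarrow> coord_prob I \<rho> \<epsilon> par \<sigma> \<le> 1)"
  using BNE_always_one assms cost_ratio_le_q1_iff [OF bonus_pos rho eps]
    coord_prob_le_one [OF rho eps] BNE_mixed by blast

lemma max_coord_prob_medium_cost:
  assumes "q1 \<rho> \<epsilon> < \<gamma> / bonus" and "\<gamma> / bonus \<le> q2 I \<epsilon>"
  shows "(\<exists>\<sigma>. BNE I \<rho> \<epsilon> par u \<sigma> \<and> coord_prob I \<rho> \<epsilon> par \<sigma> = \<rho> * (1 - \<epsilon>) ^ I)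
       \<and> (\<forall>\<sigma>. BNE I \<rho> \<epsilon> par u \<sigma> \<longrightarrow> coord_prob I \<rho> \<epsilon> par \<sigma> \<le> \<rho> * (1 - \<epsilon>) ^ I)"
proof -
  have low_q1: "bonus * \<rho> * \<epsilon> < \<gamma> * (1 - \<rho> * (1 - \<epsilon>))"
    using assms(1) cost_ratio_le_q1_iff [OF bonus_pos rho eps, of \<gamma>] by (simp add: not_le [symmetric])
  have "\<gamma> \<le> bonus * (1 - \<epsilon>) ^ (I - 1)"
    using assms(2) cost_ratio_le_q2_iff [OF bonus_pos] by simp
  then have "\<exists>\<sigma>. BNE I \<rho> \<epsilon> par u \<sigma> \<and> coord_prob I \<rho> \<epsilon> par \<sigma> = \<rho> * (1 - \<epsilon>) ^ I"
    using BNE_follow_message [OF low_q1] by blast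
  moreover have "coord_prob I \<rho> \<epsilon> par \<sigma> \<le> \<rho> * (1 - \<epsilon>) ^ I" if "BNE I \<rho> \<epsilon> par u \<sigma>" for \<sigma>
    using two_agents BNE_uninformed_abstain [OF that low_q1] BNE_mixed [OF that]
    by (intro coord_prob_le_all_delivered [OF tree _ rho eps]) auto
  ultimately show ?thesis by blast
qed

lemma max_coord_prob_high_cost:
  assumes "q1 \<rho> \<epsilon> < \<gamma> / bonus" and "q2 I \<epsilon> < \<gamma> / bonus"
  shows "(\<exists>\<sigma>. BNE I \<rho> \<epsilon> par u \<sigma> \<and> coord_prob I \<rho> \<epsilon> par \<sigma> = 0)
       \<and> (\<forall>\<sigma>. BNE I \<rho> \<epsilon> par u \<sigma> \<longrightarrow> coord_prob I \<rho> \<epsilon> par \<sigma> \<le> 0)"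
proof -
  have low_q1: "bonus * \<rho> * \<epsilon> < \<gamma> * (1 - \<rho> * (1 - \<epsilon>))"
    using assms(1) cost_ratio_le_q1_iff [OF bonus_pos rho eps, of \<gamma>] by (simp add: not_le [symmetric])
  have high_q2: "bonus * (1 - \<epsilon>) ^ (I - 1) < \<gamma>"
    using assms(2) cost_ratio_le_q2_iff [OF bonus_pos] by (simp add: not_le [symmetric])
  obtain s where s: "s \<in> {1..I}" "path_agents par s = {s}"
    using seed_exists [OF tree] two_agents by auto
  have "coord_prob I \<rho> \<epsilon> par \<sigma> = 0" if BNE: "BNE I \<rho> \<epsilon> par u \<sigma>" for \<sigma>
  proof -
    have uninformed: "\<And>j. j \<in> {1..I} \<Longrightarrow> \<sigma> j False = 0"
      using BNE_uninformed_abstain [OF BNE low_q1] .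
    have "incentive I \<rho> \<epsilon> w \<gamma> par \<sigma> s True < 0"
      by (intro incentive_seed_informed_neg [where \<sigma> = \<sigma>, OF s _ uninformed high_q2] BNE_mixed [OF BNE])
    then have "\<sigma> s True = 0" by (rule BNE_incentive_neg_imp_zero [OF class_P s(1) BNE])
    then show ?thesis using coord_prob_eq_zero [OF s(1)] uninformed [OF s(1)] by blast
  qed
  then show ?thesis using BNE_never_one by auto
qed

end

theorem mainTheorem8:
  fixes I :: nat and \<rho> \<epsilon> w \<gamma> :: real
    and u :: "bool \<Rightarrow> bool \<Rightarrow> nat \<Rightarrow> real" and par :: "nat \<Rightarrow> nat"
  assumes "I \<ge> 2" and "0 < \<rho>" and "\<rho> < 1" and "0 < \<epsilon>" and "\<epsilon> < 1"
    and "\<epsilon> < epsbar I \<rho>"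
    and "\<gamma> > 0" and "w > - (real I - 1) * \<gamma>"
    and "in_class_P I w \<gamma> u"
    and "info_tree I par"
  shows "let p = \<gamma> / (w + \<gamma> * real I);
             c = (if p \<le> q1 \<rho> \<epsilon> then 1
                  else if p \<le> q2 I \<epsilon> then \<rho> * (1 - \<epsilon>) ^ I else 0)
         in (\<exists>\<sigma>. BNE I \<rho> \<epsilon> par u \<sigma> \<and> coord_prob I \<rho> \<epsilon> par \<sigma> = c) \<and>
            (\<forall>\<sigma>. BNE I \<rho> \<epsilon> par u \<sigma> \<longrightarrow> coord_prob I \<rho> \<epsilon> par \<sigma> \<le> c)"
proof -
  interpret coordination_game I \<rho> \<epsilon> w \<gamma> u par
    using assms by unfold_locales auto
  have "q1 \<rho> \<epsilon> < q2 I \<epsilon>" using q1_less_q2 assms by blast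
  then show ?thesis
    using max_coord_prob_low_cost max_coord_prob_medium_cost max_coord_prob_high_cost
    unfolding Let_def by (auto simp: not_le)
qed

end
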